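(* Let $G$ be a bipartite graph with bipartition $(A,B)$, and let $A$ be the union of disjoint sets $A_1,A_2$, each of which is laminar in $G$. Then the following are equivalent: (a) every hole of $G$ has length four; (b) there is a tree $T$ with $V(T)=B$ such that for each $a\in A$, $N(a)$ is the vertex set of a subtree of $T$.
   Context: A hole is an induced cycle of length at least four. $N(a)$ denotes the set of neighbours of $a$. A set $A'\subseteq A$ is laminar in $G$ if for all distinct $a,a'\in A'$, either $N(a)\subseteq N(a')$, or $N(a')\subseteq N(a)$, or $N(a)\cap N(a')=\emptyset$. *)

theory Defs
  imports Main
begin

definition graph :: "'v set \<Rightarrow> ('v \<Rightarrow> 'v \<Rightarrow> bool) \<Rightarrow> bool" where
  "graph V E \<longleftrightarrow> finite V \<and> (\<forall>x y. E x y \<longrightarrow> x \<in> V \<and> y \<in> V)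
     \<and> (\<forall>x y. E x y \<longrightarrow> E y x) \<and> (\<forall>x. \<not> E x x)"

definition bipartite_with :: "'v set \<Rightarrow> ('v \<Rightarrow> 'v \<Rightarrow> bool) \<Rightarrow> 'v set \<Rightarrow> 'v set \<Rightarrow> bool" where
  "bipartite_with V E A B \<longleftrightarrow> graph V E \<and> A \<union> B = V \<and> A \<inter> B = {}
     \<and> (\<forall>x y. E x y \<longrightarrow> (x \<in> A \<and> y \<in> B) \<or> (x \<in> B \<and> y \<in> A))"

definition nbhd :: "('v \<Rightarrow> 'v \<Rightarrow> bool) \<Rightarrow> 'v \<Rightarrow> 'v set" where
  "nbhd E a = {y. E a y}"

definition laminar :: "('v \<Rightarrow> 'v \<Rightarrow> bool) \<Rightarrow> 'v set \<Rightarrow> bool" where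
  "laminar E A' \<longleftrightarrow> (\<forall>a\<in>A'. \<forall>a'\<in>A'. a \<noteq> a' \<longrightarrow>
     nbhd E a \<subseteq> nbhd E a' \<or> nbhd E a' \<subseteq> nbhd E a \<or> nbhd E a \<inter> nbhd E a' = {})"

definition is_cycle :: "'v set \<Rightarrow> ('v \<Rightarrow> 'v \<Rightarrow> bool) \<Rightarrow> 'v list \<Rightarrow> bool" where
  "is_cycle V E vs \<longleftrightarrow> length vs \<ge> 3 \<and> distinct vs \<and> set vs \<subseteq> V
     \<and> (\<forall>i < length vs. E (vs ! i) (vs ! (Suc i mod length vs)))"

definition is_induced_cycle :: "'v set \<Rightarrow> ('v \<Rightarrow> 'v \<Rightarrow> bool) \<Rightarrow> 'v list \<Rightarrow> bool" where
  "is_induced_cycle V E vs \<longleftrightarrow> is_cycle V E vs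
     \<and> (\<forall>i < length vs. \<forall>j < length vs.
          E (vs ! i) (vs ! j) \<longrightarrow> j = Suc i mod length vs \<or> i = Suc j mod length vs)"

definition is_hole :: "'v set \<Rightarrow> ('v \<Rightarrow> 'v \<Rightarrow> bool) \<Rightarrow> 'v list \<Rightarrow> bool" where
  "is_hole V E vs \<longleftrightarrow> is_induced_cycle V E vs \<and> length vs \<ge> 4"

definition connected_set :: "('v \<Rightarrow> 'v \<Rightarrow> bool) \<Rightarrow> 'v set \<Rightarrow> bool" where
  "connected_set T S \<longleftrightarrow> (\<forall>x\<in>S. \<forall>y\<in>S. (\<lambda>u v. u \<in> S \<and> v \<in> S \<and> T u v)\<^sup>*\<^sup>* x y)"

definition is_tree :: "'v set \<Rightarrow> ('v \<Rightarrow> 'v \<Rightarrow> bool) \<Rightarrow> bool" where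
  "is_tree VT T \<longleftrightarrow> graph VT T \<and> connected_set T VT \<and> (\<nexists>vs. is_cycle VT T vs)"

text \<open>S is the vertex set of a subtree of tree (VT,T): S \<subseteq> VT and T[S] is connected
  (an induced connected subgraph of a tree is a tree).\<close>
definition subtree_vertex_set :: "'v set \<Rightarrow> ('v \<Rightarrow> 'v \<Rightarrow> bool) \<Rightarrow> 'v set \<Rightarrow> bool" where
  "subtree_vertex_set VT T S \<longleftrightarrow> S \<subseteq> VT \<and> connected_set T S"

end

(*
  (b) implies (a), by induction on |B|: delete a leaf l of the tree, with neighbour p. On a
  long hole through l, each of the two neighbours u, w of l has a second hole-neighbour that
  the other one does not see, so by laminarity u and w lie in different families. Their
  neighbourhoods are subtrees containing l and another vertex, hence both contain p, and
  laminarity then makes p a twin of l on the hole: replacing l by p gives a long hole avoiding l.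

  (a) implies (b), by induction on |B|: it suffices to find distinct b, b' in B such that
  every N(a) containing b is {b} or contains b', and to hang b from b' on a tree for B - {b}.
  For any z in B there is such a b other than z. Let K be the B-side of the component of some
  c other than z in G - N[z]. The neighbourhoods of two neighbours of z that see K meet inside
  K, since otherwise a shortest path between them in G - N[z], closed up through z, is a long
  hole; with only two laminar families this gives a point k0 of K common to all of them. If
  K = {c}, then c hangs from z; otherwise the argument is repeated in the subgraph induced by
  A and K, with k0 in place of z.
*)
theory Submission
  imports Defs
begin

definition path_adj :: "'v list \<Rightarrow> 'v \<Rightarrow> 'v \<Rightarrow> bool" where
  "path_adj xs x y \<longleftrightarrow> (\<exists>i. Suc i < length xs \<and> xs!i = x \<and> xs!Suc i = y)"

definition cycle_adj :: "'v list \<Rightarrow> 'v \<Rightarrow> 'v \<Rightarrow> bool" where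
  "cycle_adj xs x y \<longleftrightarrow> path_adj xs x y \<or> (xs \<noteq> [] \<and> x = last xs \<and> y = hd xs)"

lemma path_adj_in_set: "path_adj xs x y \<Longrightarrow> x \<in> set xs \<and> y \<in> set xs"
  unfolding path_adj_def by auto

lemma cycle_adj_in_set: "cycle_adj xs x y \<Longrightarrow> x \<in> set xs \<and> y \<in> set xs"
  unfolding cycle_adj_def by (meson path_adj_in_set last_in_set hd_in_set)

lemma path_adj_Nil [simp]: "\<not> path_adj [] x y"
  unfolding path_adj_def by simp

lemma path_adj_Cons:
  "path_adj (u # ys) x y \<longleftrightarrow> (ys \<noteq> [] \<and> x = u \<and> y = hd ys) \<or> path_adj ys x y"
proof
  assume "path_adj (u # ys) x y"
  then obtain i where i: "Suc i < length (u # ys)" "(u # ys)!i = x" "(u # ys)!Suc i = y"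
    unfolding path_adj_def by blast
  then show "(ys \<noteq> [] \<and> x = u \<and> y = hd ys) \<or> path_adj ys x y"
    unfolding path_adj_def by (cases i) (auto simp: hd_conv_nth)
next
  assume "(ys \<noteq> [] \<and> x = u \<and> y = hd ys) \<or> path_adj ys x y"
  then show "path_adj (u # ys) x y"
    unfolding path_adj_def
    by (auto simp: hd_conv_nth intro: exI[of _ 0])
qed

lemma cycle_adj_iff_nth:
  assumes "xs \<noteq> []"
  shows "cycle_adj xs x y \<longleftrightarrow> (\<exists>i<length xs. xs!i = x \<and> xs!(Suc i mod length xs) = y)"
proof
  assume "cycle_adj xs x y"
  then consider "path_adj xs x y" | "x = last xs" "y = hd xs" unfolding cycle_adj_def by blast
  then show "\<exists>i<length xs. xs!i = x \<and> xs!(Suc i mod length xs) = y"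
  proof cases
    case 1
    then show ?thesis unfolding path_adj_def by (metis Suc_lessD mod_less)
  next
    case 2
    then show ?thesis using assms
      by (intro exI[of _ "length xs - 1"]) (auto simp: last_conv_nth hd_conv_nth)
  qed
next
  assume "\<exists>i<length xs. xs!i = x \<and> xs!(Suc i mod length xs) = y"
  then obtain i where i: "i < length xs" "xs!i = x" "xs!(Suc i mod length xs) = y" by blast
  show "cycle_adj xs x y"
  proof (cases "Suc i < length xs")
    case True
    then show ?thesis using i unfolding cycle_adj_def path_adj_def by auto
  next
    case False
    then have "i = length xs - 1" using i by auto
    then show ?thesis using i assms unfolding cycle_adj_def by (auto simp: last_conv_nth hd_conv_nth)
  qed
qed

lemma path_adj_append:
  "path_adj (xs @ ys) x y \<longleftrightarrow>
     path_adj xs x y \<or> path_adj ys x y \<or> (xs \<noteq> [] \<and> ys \<noteq> [] \<and> x = last xs \<and> y = hd ys)"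
  by (induction xs) (auto simp: path_adj_Cons)

lemma cycle_adj_append:
  "xs \<noteq> [] \<Longrightarrow> ys \<noteq> [] \<Longrightarrow> cycle_adj (xs @ ys) x y \<longleftrightarrow>
     path_adj xs x y \<or> path_adj ys x y \<or> (x = last xs \<and> y = hd ys) \<or> (x = last ys \<and> y = hd xs)"
  unfolding cycle_adj_def path_adj_append by auto

lemma cycle_adj_nth_iff:
  assumes "distinct vs" "i < length vs" "j < length vs"
  shows "cycle_adj vs (vs!i) (vs!j) \<longleftrightarrow> j = Suc i mod length vs"
proof -
  have ne: "vs \<noteq> []" using assms(2) by auto
  have "Suc k mod length vs < length vs" for k using assms(2) by (intro mod_less_divisor) linarith
  then show ?thesis using assms
    by (auto simp: cycle_adj_iff_nth[OF ne] nth_eq_iff_index_eq)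
qed

lemma is_cycle_iff_cycle_adj:
  "is_cycle V E vs \<longleftrightarrow>
     3 \<le> length vs \<and> distinct vs \<and> set vs \<subseteq> V \<and> (\<forall>x y. cycle_adj vs x y \<longrightarrow> E x y)"
  by (cases "vs = []") (auto simp: is_cycle_def cycle_adj_iff_nth)

lemma is_induced_cycle_iff_cycle_adj:
  "is_induced_cycle V E vs \<longleftrightarrow> is_cycle V E vs \<and>
     (\<forall>x\<in>set vs. \<forall>y\<in>set vs. E x y \<longrightarrow> cycle_adj vs x y \<or> cycle_adj vs y x)"
proof (cases "is_cycle V E vs")
  case True
  then have "distinct vs" unfolding is_cycle_def by blast
  then show ?thesis
    unfolding is_induced_cycle_def by (simp add: all_set_conv_all_nth cycle_adj_nth_iff)
qed (simp add: is_induced_cycle_def)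

lemma cycle_adj_succ_unique:
  assumes "distinct vs" "cycle_adj vs x y" "cycle_adj vs x y'"
  shows "y = y'"
proof -
  have ne: "vs \<noteq> []" using assms(2) cycle_adj_in_set by fastforce
  show ?thesis using assms by (auto simp: cycle_adj_iff_nth[OF ne] nth_eq_iff_index_eq)
qed

lemma cycle_adj_pred_unique:
  assumes "distinct vs" "cycle_adj vs x y" "cycle_adj vs x' y"
  shows "x = x'"
proof -
  have ne: "vs \<noteq> []" using assms(2) cycle_adj_in_set by fastforce
  obtain i i' where "i < length vs" "i' < length vs" "x = vs!i" "x' = vs!i'"
    "vs!(Suc i mod length vs) = vs!(Suc i' mod length vs)"
    using assms(2,3) by (auto simp: cycle_adj_iff_nth[OF ne])
  moreover have "Suc k mod length vs < length vs" for k using ne by simp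
  ultimately have "Suc i mod length vs = Suc i' mod length vs" "i < length vs" "i' < length vs"
    using assms(1) nth_eq_iff_index_eq by blast+
  then have "i = i'" by (auto simp: mod_Suc split: if_splits)
  then show ?thesis using \<open>x = vs!i\<close> \<open>x' = vs!i'\<close> by simp
qed

lemma cycle_adj_succ_exists: "x \<in> set vs \<Longrightarrow> \<exists>y. cycle_adj vs x y"
  by (cases "vs = []") (auto simp: in_set_conv_nth cycle_adj_iff_nth)

lemma cycle_adj_pred_exists: "x \<in> set vs \<Longrightarrow> \<exists>w. cycle_adj vs w x"
proof -
  assume "x \<in> set vs"
  then obtain j where j: "j < length vs" "vs!j = x" by (auto simp: in_set_conv_nth)
  show ?thesis
  proof (cases j)
    case 0
    then have "cycle_adj vs (last vs) x" using j unfolding cycle_adj_def by (auto simp: hd_conv_nth)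
    then show ?thesis by blast
  next
    case (Suc i)
    then have "path_adj vs (vs!i) x" using j unfolding path_adj_def by blast
    then show ?thesis unfolding cycle_adj_def by blast
  qed
qed

lemma cycle_adj_asym:
  assumes "distinct vs" "3 \<le> length vs" "cycle_adj vs x y"
  shows "\<not> cycle_adj vs y x"
proof
  assume "cycle_adj vs y x"
  moreover obtain i j where "i < length vs" "j < length vs" "x = vs!i" "y = vs!j"
    using assms(3) cycle_adj_in_set by (metis in_set_conv_nth)
  ultimately show False using assms
    by (auto simp: cycle_adj_nth_iff mod_Suc split: if_splits)
qed

lemma cycle_adj_closed_subset:
  assumes "x \<in> S" "S \<subseteq> set vs" and closed: "\<And>x y. x \<in> S \<Longrightarrow> cycle_adj vs x y \<Longrightarrow> y \<in> S"
  shows "set vs \<subseteq> S"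
proof
  fix y assume "y \<in> set vs"
  obtain i j where ij: "i < length vs" "vs!i = x" "j < length vs" "vs!j = y"
    using assms(1,2) \<open>y \<in> set vs\<close> by (metis in_set_conv_nth subsetD)
  then have ne: "vs \<noteq> []" by auto
  have "vs!((i + k) mod length vs) \<in> S" for k
  proof (induction k)
    case 0
    then show ?case using ij assms(1) by simp
  next
    case (Suc k)
    have "cycle_adj vs (vs!((i + k) mod length vs)) (vs!(Suc ((i + k) mod length vs) mod length vs))"
      unfolding cycle_adj_iff_nth[OF ne] using ne by (intro exI[of _ "(i + k) mod length vs"]) simp
    then show ?case using closed[OF Suc] by (simp add: mod_Suc_eq)
  qed
  from this[of "length vs - i + j"] show "y \<in> S" using ij by simp
qed

lemma induced_cycle_nbhd:
  assumes ic: "is_induced_cycle V E vs" and "symp E" "cycle_adj vs x y" "cycle_adj vs w x"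
  shows "nbhd E x \<inter> set vs = {y, w}" "y \<noteq> w"
proof -
  have d: "distinct vs" "3 \<le> length vs" and adj: "\<And>x y. cycle_adj vs x y \<Longrightarrow> E x y"
    and ind: "\<forall>x\<in>set vs. \<forall>y\<in>set vs. E x y \<longrightarrow> cycle_adj vs x y \<or> cycle_adj vs y x"
    using ic unfolding is_induced_cycle_iff_cycle_adj is_cycle_iff_cycle_adj by auto
  have in_vs: "x \<in> set vs" "y \<in> set vs" "w \<in> set vs"
    using cycle_adj_in_set[OF assms(3)] cycle_adj_in_set[OF assms(4)] by auto
  show "nbhd E x \<inter> set vs = {y, w}"
  proof
    show "nbhd E x \<inter> set vs \<subseteq> {y, w}"
    proof
      fix v assume "v \<in> nbhd E x \<inter> set vs"
      then have "cycle_adj vs x v \<or> cycle_adj vs v x" using ind in_vs unfolding nbhd_def by blast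
      then show "v \<in> {y, w}"
        using cycle_adj_succ_unique[OF d(1) assms(3)] cycle_adj_pred_unique[OF d(1) assms(4)] by blast
    qed
    show "{y, w} \<subseteq> nbhd E x \<inter> set vs"
      using adj[OF assms(3)] adj[OF assms(4)] \<open>symp E\<close> in_vs unfolding nbhd_def by (auto dest: sympD)
  qed
  show "y \<noteq> w" using cycle_adj_asym[OF d assms(3)] assms(4) by blast
qed

lemma induced_cycle_other_nbr:
  assumes "is_induced_cycle V E vs" "symp E" "x \<in> set vs" "y \<in> nbhd E x \<inter> set vs"
  obtains z where "z \<noteq> y" "nbhd E x \<inter> set vs = {y, z}"
proof -
  obtain y' w where "cycle_adj vs x y'" "cycle_adj vs w x"
    using cycle_adj_succ_exists cycle_adj_pred_exists assms(3) by metis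
  from induced_cycle_nbhd[OF assms(1,2) this] assms(4) show ?thesis
    using that[of y'] that[of w] by (auto simp: insert_commute)
qed

lemma induced_cycle_nbhd_mono:
  assumes ic: "is_induced_cycle V E vs" and "symp E" "x \<in> set vs" "v \<in> set vs"
    and "nbhd E x \<subseteq> nbhd E v"
  shows "nbhd E x \<inter> set vs = nbhd E v \<inter> set vs"
proof -
  have two_nbrs: "\<exists>y y'. y \<noteq> y' \<and> nbhd E u \<inter> set vs = {y, y'}" if u: "u \<in> set vs" for u
  proof -
    obtain y y' where "cycle_adj vs u y" "cycle_adj vs y' u"
      using cycle_adj_succ_exists[OF u] cycle_adj_pred_exists[OF u] by blast
    from induced_cycle_nbhd[OF ic \<open>symp E\<close> this] show ?thesis by blast
  qed
  obtain y y' where x: "y \<noteq> y'" "nbhd E x \<inter> set vs = {y, y'}" using two_nbrs[OF assms(3)] by blast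
  obtain w w' where v: "nbhd E v \<inter> set vs = {w, w'}" using two_nbrs[OF assms(4)] by blast
  have "{y, y'} \<subseteq> {w, w'}" using x(2) v assms(5) by blast
  then have "{y, y'} = {w, w'}" using x(1) by blast
  then show ?thesis using x(2) v by simp
qed

text \<open>Here \<open>w l u u'\<close> is a path along the cycle; if its ends were adjacent, \<open>{l, u, u', w}\<close>
  would be closed under cycle adjacency and hence contain the whole cycle.\<close>
lemma long_induced_cycle_P4_ends:
  assumes ic: "is_induced_cycle V E vs" and "symp E" and long: "5 \<le> length vs" and "l \<in> set vs"
    and l: "nbhd E l \<inter> set vs = {u, w}" "u \<noteq> w"
    and u: "nbhd E u \<inter> set vs = {l, u'}" "u' \<noteq> l"
  shows "\<not> E w u'"
proof
  assume "E w u'"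
  have d: "distinct vs" and adj: "\<And>x y. cycle_adj vs x y \<Longrightarrow> E x y"
    using ic unfolding is_induced_cycle_iff_cycle_adj is_cycle_iff_cycle_adj by auto
  have in_vs: "u \<in> set vs" "w \<in> set vs" "u' \<in> set vs" using l u by blast+
  have "l \<in> nbhd E w \<inter> set vs" "u \<in> nbhd E u' \<inter> set vs"
    using l(1) u(1) \<open>l \<in> set vs\<close> in_vs \<open>symp E\<close> unfolding nbhd_def by (auto dest: sympD)
  then obtain w' u'' where "nbhd E w \<inter> set vs = {l, w'}" "nbhd E u' \<inter> set vs = {u, u''}"
    using induced_cycle_other_nbr[OF ic \<open>symp E\<close>] in_vs by metis
  moreover have "u' \<in> nbhd E w" "w \<in> nbhd E u'"
    using \<open>E w u'\<close> \<open>symp E\<close> unfolding nbhd_def by (auto dest: sympD)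
  ultimately have w: "nbhd E w \<inter> set vs = {l, u'}" and u': "nbhd E u' \<inter> set vs = {u, w}"
    using in_vs l(2) u(2) by auto
  have closed: "nbhd E x \<inter> set vs \<subseteq> {l, u, u', w}" if "x \<in> {l, u, u', w}" for x
    using that l(1) u(1) w u' by auto
  have "set vs \<subseteq> {l, u, u', w}"
  proof (rule cycle_adj_closed_subset)
    fix x y assume "x \<in> {l, u, u', w}" "cycle_adj vs x y"
    then have "y \<in> nbhd E x \<inter> set vs"
      using adj cycle_adj_in_set unfolding nbhd_def by (metis IntI mem_Collect_eq)
    then show "y \<in> {l, u, u', w}" using closed[OF \<open>x \<in> {l, u, u', w}\<close>] by blast
  qed (use \<open>l \<in> set vs\<close> in_vs in auto)
  then have "length vs \<le> card {l, u, u', w}"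
    using distinct_card[OF d] card_mono[of "{l, u, u', w}" "set vs"] by simp
  also have "\<dots> \<le> 4" by (simp add: card_insert_if)
  finally show False using long by simp
qed

definition induced_path :: "('v \<Rightarrow> 'v \<Rightarrow> bool) \<Rightarrow> 'v list \<Rightarrow> bool" where
  "induced_path E xs \<longleftrightarrow> distinct xs \<and> (\<forall>x y. path_adj xs x y \<longrightarrow> E x y)
     \<and> (\<forall>x\<in>set xs. \<forall>y\<in>set xs. E x y \<longrightarrow> path_adj xs x y \<or> path_adj xs y x)"

lemma induced_cycle_append:
  assumes P: "induced_path E P" "P \<noteq> []" and Q: "induced_path E Q" "Q \<noteq> []"
    and disj: "set P \<inter> set Q = {}" and "3 \<le> length P + length Q" "set P \<union> set Q \<subseteq> V"
    and ends: "E (last P) (hd Q)" "E (last Q) (hd P)"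
    and no_chord: "\<And>x y. x \<in> set P \<Longrightarrow> y \<in> set Q \<Longrightarrow> E x y \<or> E y x \<Longrightarrow>
       (x = last P \<and> y = hd Q) \<or> (x = hd P \<and> y = last Q)"
  shows "is_induced_cycle V E (P @ Q)"
proof -
  note adj = cycle_adj_append[OF P(2) Q(2)]
  have "is_cycle V E (P @ Q)" unfolding is_cycle_iff_cycle_adj
    using assms unfolding induced_path_def adj by auto
  moreover have "cycle_adj (P @ Q) x y \<or> cycle_adj (P @ Q) y x"
    if xy: "x \<in> set (P @ Q)" "y \<in> set (P @ Q)" and "E x y" for x y
  proof -
    consider "x \<in> set P" "y \<in> set P" | "x \<in> set Q" "y \<in> set Q"
      | "x \<in> set P" "y \<in> set Q" | "x \<in> set Q" "y \<in> set P"
      using xy unfolding set_append Un_iff by blast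
    then show ?thesis
    proof cases
      case 1
      then show ?thesis using P(1) \<open>E x y\<close> unfolding induced_path_def adj by blast
    next
      case 2
      then show ?thesis using Q(1) \<open>E x y\<close> unfolding induced_path_def adj by blast
    next
      case 3
      then show ?thesis using no_chord[of x y] \<open>E x y\<close> unfolding adj by blast
    next
      case 4
      then show ?thesis using no_chord[of y x] \<open>E x y\<close> unfolding adj by blast
    qed
  qed
  ultimately show ?thesis by (simp add: is_induced_cycle_iff_cycle_adj)
qed

lemma induced_cycle_map:
  assumes ic: "is_induced_cycle V E vs" and "inj_on g (set vs)" "g ` set vs \<subseteq> V'"
    and adj: "\<And>x y. x \<in> set vs \<Longrightarrow> y \<in> set vs \<Longrightarrow> E' (g x) (g y) \<longleftrightarrow> E x y"
  shows "is_induced_cycle V' E' (map g vs)"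
proof -
  have "Suc i mod length vs < length vs" if "i < length vs" for i
    using that by (intro mod_less_divisor) linarith
  then show ?thesis
    using assms unfolding is_induced_cycle_def is_cycle_def by (auto simp: distinct_map)
qed

definition walk :: "('v \<Rightarrow> 'v \<Rightarrow> bool) \<Rightarrow> 'v list \<Rightarrow> bool" where
  "walk R xs \<longleftrightarrow> xs \<noteq> [] \<and> (\<forall>i. Suc i < length xs \<longrightarrow> R (xs!i) (xs!Suc i))"

lemma walk_path_adj: "walk R xs \<Longrightarrow> path_adj xs x y \<Longrightarrow> R x y"
  unfolding walk_def path_adj_def by auto

lemma walk_snoc:
  assumes "walk R xs" "R (last xs) y"
  shows "walk R (xs @ [y])"
  unfolding walk_def
proof (intro conjI allI impI)
  fix i assume i: "Suc i < length (xs @ [y])"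
  show "R ((xs @ [y])!i) ((xs @ [y])!Suc i)"
  proof (cases "Suc i < length xs")
    case True
    then show ?thesis using assms(1) by (simp add: walk_def nth_append)
  next
    case False
    then have "i = length xs - 1" "xs \<noteq> []" using i assms(1) by (auto simp: walk_def)
    then show ?thesis using assms(2) by (simp add: nth_append last_conv_nth)
  qed
qed simp

lemma rtranclp_imp_walk:
  assumes "R\<^sup>*\<^sup>* x y"
  obtains xs where "walk R xs" "hd xs = x" "last xs = y"
proof -
  from assms have "\<exists>xs. walk R xs \<and> hd xs = x \<and> last xs = y"
  proof (induction rule: rtranclp_induct)
    case base
    show ?case by (intro exI[of _ "[x]"]) (simp add: walk_def)
  next
    case (step y z)
    then obtain xs where "walk R xs" "hd xs = x" "last xs = y" by blast
    then show ?case using walk_snoc[of R xs z] step.hyps(2)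
      by (intro exI[of _ "xs @ [z]"]) (auto simp: walk_def)
  qed
  then show ?thesis using that by blast
qed

lemma walk_imp_rtranclp: "walk R xs \<Longrightarrow> x \<in> set xs \<Longrightarrow> R\<^sup>*\<^sup>* (hd xs) x"
proof -
  assume w: "walk R xs" and "x \<in> set xs"
  have "R\<^sup>*\<^sup>* (hd xs) (xs!i)" if "i < length xs" for i
    using that
  proof (induction i)
    case 0
    then show ?case by (simp add: hd_conv_nth)
  next
    case (Suc i)
    then have "R (xs!i) (xs!Suc i)" using w unfolding walk_def by auto
    then show ?case using Suc by (meson Suc_lessD rtranclp.rtrancl_into_rtrancl)
  qed
  then show ?thesis using \<open>x \<in> set xs\<close> by (auto simp: in_set_conv_nth)
qed

text \<open>Cutting out the segment strictly between positions \<open>i - 1\<close> and \<open>j\<close>; this removes both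
  repeated vertices (\<open>xs!i = xs!j\<close>) and shortcuts (an edge from \<open>xs!(i - 1)\<close> to \<open>xs!j\<close>).\<close>
lemma walk_splice:
  assumes w: "walk R xs" and ij: "i < j" "j < length xs"
    and shortcut: "0 < i \<Longrightarrow> R (xs!(i - 1)) (xs!j)"
  shows "walk R (take i xs @ drop j xs)"
  unfolding walk_def
proof (intro conjI allI impI)
  show "take i xs @ drop j xs \<noteq> []" using ij by simp
  fix k assume k: "Suc k < length (take i xs @ drop j xs)"
  have nth: "(take i xs @ drop j xs)!m = (if m < i then xs!m else xs!(m - i + j))"
    if "m < length (take i xs @ drop j xs)" for m
    using that ij by (simp add: nth_append min_def add.commute)
  consider "Suc k < i" | "Suc k = i" | "i \<le> k" by linarith
  then show "R ((take i xs @ drop j xs)!k) ((take i xs @ drop j xs)!Suc k)"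
  proof cases
    case 1
    then show ?thesis using w ij k nth[of k] nth[of "Suc k"] unfolding walk_def by simp
  next
    case 2
    then have "i - 1 = k" by simp
    then show ?thesis using shortcut 2 k nth[of k] nth[of "Suc k"] by simp
  next
    case 3
    define m where "m = k - i + j"
    have "Suc m < length xs" using k ij 3 by (simp add: m_def)
    moreover have "(take i xs @ drop j xs)!k = xs!m" "(take i xs @ drop j xs)!Suc k = xs!Suc m"
      using nth[of k] nth[of "Suc k"] k 3 by (simp_all add: m_def Suc_diff_le)
    ultimately show ?thesis using w unfolding walk_def by simp
  qed
qed

lemma walk_drop: "walk R xs \<Longrightarrow> i < length xs \<Longrightarrow> walk R (drop i xs)"
  and walk_take: "walk R xs \<Longrightarrow> 0 < i \<Longrightarrow> walk R (take i xs)"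
  unfolding walk_def by auto

lemma shortest_walk_is_induced_path:
  assumes "symp R" "irreflp R" "walk R ys"
    and shortest: "\<And>zs. walk R zs \<Longrightarrow> hd zs = hd ys \<Longrightarrow> last zs = last ys \<Longrightarrow> length ys \<le> length zs"
  shows "induced_path R ys"
proof -
  have ne: "ys \<noteq> []" using assms(3) unfolding walk_def by blast
  have no_splice: False if "i < j" "j < length ys" "0 < i \<Longrightarrow> R (ys!(i - 1)) (ys!j)"
    "i = 0 \<Longrightarrow> ys!j = hd ys" for i j
  proof -
    have "hd (take i ys @ drop j ys) = hd ys"
      using that ne by (cases "i = 0") (auto simp: hd_drop_conv_nth)
    then show False
      using shortest[of "take i ys @ drop j ys"] walk_splice[OF assms(3) that(1-3)] that(1,2) by auto
  qed
  have "distinct ys"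
  proof (rule ccontr)
    assume "\<not> distinct ys"
    then obtain i j where "i < j" "j < length ys" "ys!i = ys!j"
      by (metis distinct_conv_nth linorder_neqE_nat)
    moreover have "R (ys!(i - 1)) (ys!i)" if "0 < i"
    proof -
      have "Suc (i - 1) < length ys" using that \<open>i < j\<close> \<open>j < length ys\<close> by simp
      then show ?thesis using assms(3) that unfolding walk_def by fastforce
    qed
    moreover have "ys!j = hd ys" if "i = 0" using that \<open>ys!i = ys!j\<close> ne by (simp add: hd_conv_nth)
    ultimately show False using no_splice[of i j] by simp
  qed
  moreover have consecutive: "j = Suc i \<or> i = Suc j"
    if "i < length ys" "j < length ys" "R (ys!i) (ys!j)" for i j
  proof (rule ccontr)
    assume "\<not> (j = Suc i \<or> i = Suc j)"
    moreover have "i \<noteq> j" using that(3) \<open>irreflp R\<close> by (auto dest: irreflpD)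
    moreover have "R (ys!j) (ys!i)" using \<open>symp R\<close> that(3) by (rule sympD)
    ultimately have "Suc i < j \<or> Suc j < i" by linarith
    then show False using no_splice[of "Suc i" j] no_splice[of "Suc j" i] that \<open>R (ys!j) (ys!i)\<close> by auto
  qed
  moreover have "path_adj ys x y \<or> path_adj ys y x" if xy: "x \<in> set ys" "y \<in> set ys" "R x y" for x y
  proof -
    obtain i j where "i < length ys" "j < length ys" "ys!i = x" "ys!j = y"
      using xy(1,2) unfolding in_set_conv_nth by blast
    then show ?thesis using consecutive[of i j] xy(3) unfolding path_adj_def by auto
  qed
  ultimately show ?thesis
    using walk_path_adj[OF assms(3)] unfolding induced_path_def by blast
qed

lemma shortest_walk_induced:
  assumes "symp R" "irreflp R" and "walk R xs" "hd xs \<in> S1" "last xs \<in> S2"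
  obtains ys where "walk R ys" "induced_path R ys" "hd ys \<in> S1" "last ys \<in> S2"
    "\<And>x. x \<in> set ys \<Longrightarrow> x \<in> S1 \<Longrightarrow> x = hd ys"
    "\<And>x. x \<in> set ys \<Longrightarrow> x \<in> S2 \<Longrightarrow> x = last ys"
proof -
  let ?P = "\<lambda>ys. walk R ys \<and> hd ys \<in> S1 \<and> last ys \<in> S2"
  obtain ys where ys: "?P ys" and shortest: "\<And>zs. ?P zs \<Longrightarrow> length ys \<le> length zs"
    using ex_has_least_nat[of ?P xs length] assms(3-5) by blast
  have ne: "ys \<noteq> []" using ys unfolding walk_def by blast
  have "induced_path R ys"
    using shortest_walk_is_induced_path[OF assms(1,2)] ys shortest by auto
  moreover have "x = hd ys" if "x \<in> set ys" "x \<in> S1" for x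
  proof (rule ccontr)
    assume "x \<noteq> hd ys"
    obtain i where i: "i < length ys" "x = ys!i" using \<open>x \<in> set ys\<close> unfolding in_set_conv_nth by auto
    then have "0 < i" using \<open>x \<noteq> hd ys\<close> ne by (cases i) (auto simp: hd_conv_nth)
    have "?P (drop i ys)" using walk_drop[OF _ i(1)] ys i \<open>x \<in> S1\<close> by (simp add: hd_drop_conv_nth)
    then show False using shortest[of "drop i ys"] \<open>0 < i\<close> i(1) by simp
  qed
  moreover have "x = last ys" if "x \<in> set ys" "x \<in> S2" for x
  proof (rule ccontr)
    assume "x \<noteq> last ys"
    obtain i where i: "i < length ys" "x = ys!i" using \<open>x \<in> set ys\<close> unfolding in_set_conv_nth by auto
    have "i \<noteq> length ys - 1" using i \<open>x \<noteq> last ys\<close> ne by (auto simp: last_conv_nth)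
    then have "Suc i < length ys" using i(1) by linarith
    have "hd (take (Suc i) ys) = hd ys" "last (take (Suc i) ys) = x"
      using i by (simp add: hd_take, simp add: take_Suc_conv_app_nth)
    then have "?P (take (Suc i) ys)" using walk_take[of R ys "Suc i"] ys \<open>x \<in> S2\<close> by simp
    then show False using shortest[of "take (Suc i) ys"] \<open>Suc i < length ys\<close> by simp
  qed
  ultimately show ?thesis using that ys by blast
qed

lemma walk_set_subset:
  assumes "walk R xs" "2 \<le> length xs" "\<And>x y. R x y \<Longrightarrow> x \<in> S \<and> y \<in> S"
  shows "set xs \<subseteq> S"
proof
  fix x assume "x \<in> set xs"
  then obtain k where k: "k < length xs" "xs!k = x" by (auto simp: in_set_conv_nth)
  show "x \<in> S"
  proof (cases "Suc k < length xs")
    case True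
    then show ?thesis using assms(1,3) k unfolding walk_def by blast
  next
    case False
    then have "Suc (k - 1) < length xs" "Suc (k - 1) = k" using k(1) assms(2) by auto
    then show ?thesis using assms(1,3) k unfolding walk_def by metis
  qed
qed

lemma walk_closing_cycle:
  assumes "walk T xs" "distinct xs" "3 \<le> length xs" "set xs \<subseteq> V" "T (last xs) (hd xs)"
  shows "is_cycle V T xs"
  using assms walk_path_adj[of T xs] unfolding is_cycle_iff_cycle_adj cycle_adj_def by blast

lemma graph_symp: "graph V E \<Longrightarrow> symp E"
  and graph_irreflp: "graph V E \<Longrightarrow> irreflp E"
  and graph_edge_in: "graph V E \<Longrightarrow> E x y \<Longrightarrow> x \<in> V \<and> y \<in> V"
  unfolding graph_def by (auto intro: sympI irreflpI)

lemma connected_set_from_root: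
  assumes "symp T" "\<And>x. x \<in> S \<Longrightarrow> (\<lambda>u v. u \<in> S \<and> v \<in> S \<and> T u v)\<^sup>*\<^sup>* r x"
  shows "connected_set T S"
proof -
  have "symp (\<lambda>u v. u \<in> S \<and> v \<in> S \<and> T u v)"
    using assms(1) by (auto intro: sympI dest: sympD)
  then show ?thesis
    unfolding connected_set_def using assms(2) by (meson rtranclp_trans sympD symp_rtranclp)
qed

lemma connected_set_mono:
  assumes "connected_set T S" "\<And>x y. x \<in> S \<Longrightarrow> y \<in> S \<Longrightarrow> T x y \<Longrightarrow> T' x y"
  shows "connected_set T' S"
  unfolding connected_set_def
proof (intro ballI)
  fix x y assume "x \<in> S" "y \<in> S"
  then have "(\<lambda>u v. u \<in> S \<and> v \<in> S \<and> T u v)\<^sup>*\<^sup>* x y" using assms(1) unfolding connected_set_def by blast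
  then show "(\<lambda>u v. u \<in> S \<and> v \<in> S \<and> T' u v)\<^sup>*\<^sup>* x y"
    by (rule rtranclp_mono[THEN predicate2D, rotated]) (auto intro: assms(2))
qed

lemma connected_set_subsingleton: "S \<subseteq> {x} \<Longrightarrow> connected_set T S"
  unfolding connected_set_def by auto

text \<open>Any further neighbour of the end of a longest path would either extend it or close a
  cycle.\<close>
lemma longest_path_ends_in_leaf:
  assumes g: "graph B T" and acyclic: "\<nexists>vs. is_cycle B T vs"
    and xs: "walk T xs" "distinct xs" "2 \<le> length xs"
    and longest: "\<And>ys. walk T ys \<Longrightarrow> distinct ys \<Longrightarrow> 2 \<le> length ys \<Longrightarrow> length ys \<le> length xs"
    and q: "T (last xs) q"
  shows "q = xs!(length xs - 2)"
proof (rule ccontr)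
  assume q_other: "q \<noteq> xs!(length xs - 2)"
  have in_B: "set xs \<subseteq> B" using walk_set_subset[OF xs(1,3)] graph_edge_in[OF g] by blast
  show False
  proof (cases "q \<in> set xs")
    case False
    then show False using longest[of "xs @ [q]"] walk_snoc[OF xs(1) q] xs(2,3) by simp
  next
    case True
    then obtain j where j: "j < length xs" "xs!j = q" unfolding in_set_conv_nth by blast
    have "q \<noteq> last xs" using q graph_irreflp[OF g] by (auto dest: irreflpD)
    moreover have "xs \<noteq> []" using xs(3) by auto
    ultimately have "j \<noteq> length xs - 1" using j by (auto simp: last_conv_nth)
    moreover have "j \<noteq> length xs - 2" using j q_other by blast
    ultimately have "3 \<le> length (drop j xs)" using j(1) by simp
    moreover have "hd (drop j xs) = q" using j by (simp add: hd_drop_conv_nth)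
    ultimately have "is_cycle B T (drop j xs)"
      using walk_drop[OF xs(1) j(1)] xs(2) in_B set_drop_subset[of j xs] q j(1)
      by (intro walk_closing_cycle) auto
    then show False using acyclic by blast
  qed
qed

lemma tree_has_leaf:
  assumes t: "is_tree B T" and "x \<in> B" "y \<in> B" "x \<noteq> y"
  obtains l p where "l \<in> B" "T l p" "\<And>q. T l q \<Longrightarrow> q = p"
proof -
  have g: "graph B T" and c: "connected_set T B" and acyclic: "\<nexists>vs. is_cycle B T vs"
    using t unfolding is_tree_def by auto
  have "(\<lambda>u v. u \<in> B \<and> v \<in> B \<and> T u v)\<^sup>*\<^sup>* x y" using c assms(2-4) unfolding connected_set_def by blast
  then obtain z where "T x z"
    by (rule converse_rtranclpE) (use assms(4) in blast)+
  let ?P = "\<lambda>xs. walk T xs \<and> distinct xs \<and> 2 \<le> length xs"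
  have "?P [x, z]"
    using \<open>T x z\<close> graph_irreflp[OF g] unfolding walk_def by (auto simp: less_Suc_eq dest: irreflpD)
  moreover have "length xs < Suc (card B)" if "?P xs" for xs
    using walk_set_subset[of T xs B] graph_edge_in[OF g] that distinct_card[of xs]
      card_mono[of B "set xs"] g
    unfolding graph_def by fastforce
  ultimately obtain xs where xs: "?P xs" and longest: "\<And>ys. ?P ys \<Longrightarrow> length ys \<le> length xs"
    using ex_has_greatest_nat[of ?P "[x, z]" length "Suc (card B)"] by blast
  have ne: "xs \<noteq> []" using xs by auto
  have "T (xs!(length xs - 2)) (last xs)"
  proof -
    have "Suc (length xs - 2) < length xs" "Suc (length xs - 2) = length xs - 1" using xs by auto
    then show ?thesis using xs ne unfolding walk_def by (metis last_conv_nth)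
  qed
  moreover have "last xs \<in> B"
    using walk_set_subset[of T xs B] graph_edge_in[OF g] xs ne by auto
  ultimately show ?thesis
    using that longest_path_ends_in_leaf[OF g acyclic] xs longest graph_symp[OF g]
    by (blast dest: sympD)
qed

lemma connected_set_remove_leaf:
  assumes "symp T" "irreflp T" "connected_set T S" and leaf: "\<And>q. T l q \<Longrightarrow> q = p"
  shows "connected_set (\<lambda>x y. T x y \<and> x \<noteq> l \<and> y \<noteq> l) (S - {l})"
proof -
  let ?R = "\<lambda>u v. u \<in> S \<and> v \<in> S \<and> T u v"
  let ?R' = "\<lambda>u v. u \<in> S - {l} \<and> v \<in> S - {l} \<and> (T u v \<and> u \<noteq> l \<and> v \<noteq> l)"
  have reach: "(y \<noteq> l \<longrightarrow> ?R'\<^sup>*\<^sup>* x y) \<and> (y = l \<longrightarrow> ?R'\<^sup>*\<^sup>* x p)"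
    if "?R\<^sup>*\<^sup>* x y" "x \<noteq> l" for x y
    using that(1)
  proof (induction rule: rtranclp_induct)
    case (step y z)
    have "y \<in> S" "z \<in> S" "T y z" using step.hyps(2) by auto
    show ?case
    proof (intro conjI impI)
      assume "z \<noteq> l"
      show "?R'\<^sup>*\<^sup>* x z"
      proof (cases "y = l")
        case True
        then show ?thesis using step.IH leaf[of z] \<open>T y z\<close> by simp
      next
        case False
        then have "?R' y z" using \<open>y \<in> S\<close> \<open>z \<in> S\<close> \<open>T y z\<close> \<open>z \<noteq> l\<close> by simp
        then show ?thesis using step.IH False by (simp add: rtranclp.rtrancl_into_rtrancl)
      qed
    next
      assume "z = l"
      then have "y \<noteq> l" "y = p"
        using \<open>T y z\<close> assms(1,2) leaf by (auto dest: irreflpD sympD)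
      then show "?R'\<^sup>*\<^sup>* x p" using step.IH by simp
    qed
  qed (use that(2) in simp)
  show ?thesis unfolding connected_set_def
  proof (intro ballI)
    fix x y assume "x \<in> S - {l}" "y \<in> S - {l}"
    then have "?R\<^sup>*\<^sup>* x y" using assms(3) unfolding connected_set_def by simp
    then show "?R'\<^sup>*\<^sup>* x y" using reach[of x y] \<open>x \<in> S - {l}\<close> \<open>y \<in> S - {l}\<close> by simp
  qed
qed

lemma leaf_nbr_in_connected_set:
  assumes "symp T" "connected_set T S" and leaf: "\<And>q. T l q \<Longrightarrow> q = p"
    and "l \<in> S" "x \<in> S" "x \<noteq> l"
  shows "p \<in> S"
proof -
  have "(\<lambda>u v. u \<in> S \<and> v \<in> S \<and> T u v)\<^sup>*\<^sup>* x l" using assms(2,4,5) unfolding connected_set_def by blast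
  then obtain y where "y \<in> S" "T y l"
    by (rule rtranclp.cases) (use \<open>x \<noteq> l\<close> in blast)+
  then show ?thesis using leaf assms(1) by (metis sympD)
qed

lemma tree_remove_leaf:
  assumes t: "is_tree B T" and leaf: "\<And>q. T l q \<Longrightarrow> q = p"
  shows "is_tree (B - {l}) (\<lambda>x y. T x y \<and> x \<noteq> l \<and> y \<noteq> l)"
proof -
  have g: "graph B T" and c: "connected_set T B" and acyclic: "\<nexists>vs. is_cycle B T vs"
    using t unfolding is_tree_def by auto
  have "\<nexists>vs. is_cycle (B - {l}) (\<lambda>x y. T x y \<and> x \<noteq> l \<and> y \<noteq> l) vs"
    using acyclic unfolding is_cycle_def by blast
  moreover have "graph (B - {l}) (\<lambda>x y. T x y \<and> x \<noteq> l \<and> y \<noteq> l)"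
    using g unfolding graph_def by auto
  ultimately show ?thesis
    using connected_set_remove_leaf[OF graph_symp[OF g] graph_irreflp[OF g] c leaf]
    unfolding is_tree_def by blast
qed

definition add_edge :: "('v \<Rightarrow> 'v \<Rightarrow> bool) \<Rightarrow> 'v \<Rightarrow> 'v \<Rightarrow> 'v \<Rightarrow> 'v \<Rightarrow> bool" where
  "add_edge T u v x y \<longleftrightarrow> T x y \<or> (x = u \<and> y = v) \<or> (x = v \<and> y = u)"

lemma symp_add_edge: "symp T \<Longrightarrow> symp (add_edge T u v)"
  unfolding add_edge_def by (auto intro: sympI dest: sympD)

lemma connected_set_add_leaf:
  assumes "symp T" "connected_set T S" "b' \<in> S"
  shows "connected_set (add_edge T b b') (insert b S)"
proof (rule connected_set_from_root[OF symp_add_edge[OF assms(1)]])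
  let ?R = "\<lambda>u v. u \<in> insert b S \<and> v \<in> insert b S \<and> add_edge T b b' u v"
  fix x assume "x \<in> insert b S"
  then consider "x = b" | "x \<in> S" by blast
  then show "?R\<^sup>*\<^sup>* b' x"
  proof cases
    case 1
    then show ?thesis using assms(3) unfolding add_edge_def by (simp add: r_into_rtranclp)
  next
    case 2
    then have "(\<lambda>u v. u \<in> S \<and> v \<in> S \<and> T u v)\<^sup>*\<^sup>* b' x"
      using assms(2,3) unfolding connected_set_def by blast
    then show ?thesis
      by (rule rtranclp_mono[THEN predicate2D, rotated]) (auto simp: add_edge_def)
  qed
qed

lemma tree_add_leaf:
  assumes t: "is_tree B T" and "b \<notin> B" "b' \<in> B"
  shows "is_tree (insert b B) (add_edge T b b')"
proof -
  have g: "graph B T" and c: "connected_set T B" and acyclic: "\<nexists>vs. is_cycle B T vs"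
    using t unfolding is_tree_def by auto
  have no_T: "\<not> T b y" "\<not> T y b" for y
    using graph_edge_in[OF g, of b y] graph_edge_in[OF g, of y b] assms(2) by auto
  have "b \<noteq> b'" using assms(2,3) by auto
  have "graph (insert b B) (add_edge T b b')"
    using g assms(2,3) unfolding graph_def add_edge_def by auto
  moreover have "\<not> is_cycle (insert b B) (add_edge T b b') vs" for vs
  proof
    assume cy: "is_cycle (insert b B) (add_edge T b b') vs"
    then have d: "distinct vs" "3 \<le> length vs" and "set vs \<subseteq> insert b B"
      and adj: "\<And>x y. cycle_adj vs x y \<Longrightarrow> add_edge T b b' x y"
      unfolding is_cycle_iff_cycle_adj by auto
    show False
    proof (cases "b \<in> set vs")
      case True
      obtain y w where "cycle_adj vs b y" "cycle_adj vs w b"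
        using cycle_adj_succ_exists[OF True] cycle_adj_pred_exists[OF True] by blast
      moreover from this have "y = b'" "w = b'"
        using adj no_T \<open>b \<noteq> b'\<close> unfolding add_edge_def by blast+
      ultimately show False using cycle_adj_asym[OF d] by blast
    next
      case False
      have "T x y" if "cycle_adj vs x y" for x y
        using adj[OF that] cycle_adj_in_set[OF that] False unfolding add_edge_def by auto
      moreover have "set vs \<subseteq> B" using \<open>set vs \<subseteq> insert b B\<close> False by auto
      ultimately have "is_cycle B T vs" using d unfolding is_cycle_iff_cycle_adj by blast
      then show False using acyclic by blast
    qed
  qed
  ultimately show ?thesis
    using connected_set_add_leaf[OF graph_symp[OF g] c assms(3)] unfolding is_tree_def by blast
qed

definition restrict_rel :: "('v \<Rightarrow> 'v \<Rightarrow> bool) \<Rightarrow> 'v set \<Rightarrow> 'v \<Rightarrow> 'v \<Rightarrow> bool" where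
  "restrict_rel E S x y \<longleftrightarrow> E x y \<and> x \<in> S \<and> y \<in> S"

definition all_holes_length_four :: "'v set \<Rightarrow> ('v \<Rightarrow> 'v \<Rightarrow> bool) \<Rightarrow> bool" where
  "all_holes_length_four V E \<longleftrightarrow> (\<forall>vs. is_hole V E vs \<longrightarrow> length vs = 4)"

definition nbhds_are_subtrees :: "'v set \<Rightarrow> ('v \<Rightarrow> 'v \<Rightarrow> bool) \<Rightarrow> ('v \<Rightarrow> 'v \<Rightarrow> bool) \<Rightarrow> 'v set \<Rightarrow> bool" where
  "nbhds_are_subtrees B T E A \<longleftrightarrow> (\<forall>a\<in>A. subtree_vertex_set B T (nbhd E a))"

lemma hole_restrict_rel_iff:
  assumes "S \<subseteq> V" "set vs \<subseteq> S"
  shows "is_hole S (restrict_rel E S) vs \<longleftrightarrow> is_hole V E vs"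
proof -
  have same_adj: "restrict_rel E S (id x) (id y) \<longleftrightarrow> E x y" "E (id x) (id y) \<longleftrightarrow> restrict_rel E S x y"
    if "x \<in> set vs" "y \<in> set vs" for x y
    using that assms(2) unfolding restrict_rel_def by auto
  have "is_induced_cycle S (restrict_rel E S) vs \<longleftrightarrow> is_induced_cycle V E vs"
  proof
    assume "is_induced_cycle S (restrict_rel E S) vs"
    from induced_cycle_map[OF this, of id V E] show "is_induced_cycle V E vs"
      using assms same_adj(2) by simp
  next
    assume "is_induced_cycle V E vs"
    from induced_cycle_map[OF this, of id S "restrict_rel E S"] show "is_induced_cycle S (restrict_rel E S) vs"
      using assms same_adj(1) by simp
  qed
  then show ?thesis unfolding is_hole_def by simp
qed

lemma all_holes_length_four_restrict:
  assumes "all_holes_length_four V E" "S \<subseteq> V"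
  shows "all_holes_length_four S (restrict_rel E S)"
  unfolding all_holes_length_four_def
proof (intro allI impI)
  fix vs assume hole: "is_hole S (restrict_rel E S) vs"
  then have "set vs \<subseteq> S" unfolding is_hole_def is_induced_cycle_def is_cycle_def by blast
  then show "length vs = 4"
    using hole hole_restrict_rel_iff[OF assms(2)] assms(1) unfolding all_holes_length_four_def by blast
qed

locale two_laminar =
  fixes V :: "'v set" and E :: "'v \<Rightarrow> 'v \<Rightarrow> bool" and A B A1 A2 :: "'v set"
  assumes bipartite: "bipartite_with V E A B"
    and A_split: "A = A1 \<union> A2" and laminar1: "laminar E A1" and laminar2: "laminar E A2"
begin

lemma graph: "graph V E"
  and V_split: "V = A \<union> B" "A \<inter> B = {}"
  and edge_AB: "E x y \<Longrightarrow> (x \<in> A \<and> y \<in> B) \<or> (x \<in> B \<and> y \<in> A)"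
  using bipartite unfolding bipartite_with_def by blast+

lemma E_symp: "symp E" and E_irreflp: "irreflp E"
  using graph_symp[OF graph] graph_irreflp[OF graph] .

lemma finite_A: "finite A" and finite_B: "finite B"
  using graph V_split unfolding graph_def by auto

lemma nbhd_subset_B: "a \<in> A \<Longrightarrow> nbhd E a \<subseteq> B"
  using edge_AB V_split unfolding nbhd_def by blast

lemma not_edge_A: "x \<in> A \<Longrightarrow> y \<in> A \<Longrightarrow> \<not> E x y"
  and not_edge_B: "x \<in> B \<Longrightarrow> y \<in> B \<Longrightarrow> \<not> E x y"
  using edge_AB V_split by blast+

lemma laminarD:
  "laminar E A' \<Longrightarrow> a \<in> A' \<Longrightarrow> a' \<in> A' \<Longrightarrow> a \<noteq> a' \<Longrightarrow>
    nbhd E a \<subseteq> nbhd E a' \<or> nbhd E a' \<subseteq> nbhd E a \<or> nbhd E a \<inter> nbhd E a' = {}"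
  unfolding laminar_def by blast

lemma nbhd_restrict:
  "a \<in> A \<Longrightarrow> nbhd (restrict_rel E (A \<union> B')) a = nbhd E a \<inter> B'"
  using nbhd_subset_B V_split unfolding nbhd_def restrict_rel_def by blast

lemma restrict:
  assumes "B' \<subseteq> B"
  shows "two_laminar (A \<union> B') (restrict_rel E (A \<union> B')) A B' A1 A2"
proof
  have "laminar (restrict_rel E (A \<union> B')) A'" if A': "laminar E A'" "A' \<subseteq> A" for A'
    unfolding laminar_def
  proof (intro ballI impI)
    fix a a' assume "a \<in> A'" "a' \<in> A'" "a \<noteq> a'"
    then have "a \<in> A" "a' \<in> A" using A'(2) by auto
    then show "nbhd (restrict_rel E (A \<union> B')) a \<subseteq> nbhd (restrict_rel E (A \<union> B')) a' \<or>
      nbhd (restrict_rel E (A \<union> B')) a' \<subseteq> nbhd (restrict_rel E (A \<union> B')) a \<or>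
      nbhd (restrict_rel E (A \<union> B')) a \<inter> nbhd (restrict_rel E (A \<union> B')) a' = {}"
      unfolding nbhd_restrict[OF \<open>a \<in> A\<close>] nbhd_restrict[OF \<open>a' \<in> A\<close>]
      using laminarD[OF A'(1) \<open>a \<in> A'\<close> \<open>a' \<in> A'\<close> \<open>a \<noteq> a'\<close>] by blast
  qed
  then show "laminar (restrict_rel E (A \<union> B')) A1" "laminar (restrict_rel E (A \<union> B')) A2"
    using laminar1 laminar2 A_split by auto
  have "graph (A \<union> B') (restrict_rel E (A \<union> B'))"
    using graph finite_A finite_B assms unfolding graph_def restrict_rel_def by (auto intro: finite_subset)
  moreover have "(x \<in> A \<and> y \<in> B') \<or> (x \<in> B' \<and> y \<in> A)" if "restrict_rel E (A \<union> B') x y" for x y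
    using that edge_AB[of x y] V_split unfolding restrict_rel_def by blast
  ultimately show "bipartite_with (A \<union> B') (restrict_rel E (A \<union> B')) A B'"
    using V_split assms unfolding bipartite_with_def by blast
qed (fact A_split)

lemma hole_in_V: "is_hole V E vs \<Longrightarrow> set vs \<subseteq> V"
  unfolding is_hole_def is_induced_cycle_def is_cycle_def by blast

lemma hole_meets_B_twice:
  assumes "is_hole V E vs"
  obtains b1 b2 where "b1 \<in> B" "b2 \<in> B" "b1 \<noteq> b2"
proof -
  have ic: "is_induced_cycle V E vs" and d: "distinct vs" "3 \<le> length vs"
    and adj: "\<And>x y. cycle_adj vs x y \<Longrightarrow> E x y"
    using assms unfolding is_hole_def is_induced_cycle_iff_cycle_adj is_cycle_iff_cycle_adj by auto
  obtain x where "x \<in> set vs" using d by (cases vs) auto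
  then obtain y w where xy: "cycle_adj vs x y" and wx: "cycle_adj vs w x"
    using cycle_adj_succ_exists cycle_adj_pred_exists by metis
  then obtain y' where yy': "cycle_adj vs y y'"
    using cycle_adj_succ_exists cycle_adj_in_set by metis
  have "y \<noteq> w" using induced_cycle_nbhd(2)[OF ic E_symp xy wx] .
  moreover have "x \<noteq> y'" using cycle_adj_asym[OF d xy] yy' by blast
  moreover have "x \<in> A \<and> y \<in> B \<and> w \<in> B \<or> x \<in> B \<and> y \<in> A \<and> y' \<in> B"
    using edge_AB adj[OF xy] adj[OF wx] adj[OF yy'] V_split by blast
  ultimately show ?thesis using that by blast
qed

lemma induced_path_B_ends_length:
  assumes "induced_path E P" "P \<noteq> []" "hd P \<in> B" "last P \<in> B" "hd P \<noteq> last P"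
  shows "3 \<le> length P"
proof (rule ccontr)
  assume "\<not> 3 \<le> length P"
  moreover have "length P \<noteq> 1" using assms(5) by (cases P) auto
  moreover have "length P \<noteq> 0" using assms(2) by simp
  ultimately have "length P = 2" by linarith
  then have "path_adj P (hd P) (last P)"
    unfolding path_adj_def using assms(2) by (auto simp: hd_conv_nth last_conv_nth intro!: exI[of _ 0])
  then show False using assms(1,3,4) not_edge_B unfolding induced_path_def by blast
qed

end

section \<open>A subtree representation excludes long holes\<close>

context two_laminar
begin

text \<open>Each of \<open>u, w\<close> has a private neighbour on the hole, while both see \<open>l\<close>.\<close>
lemma long_hole_nbrs_not_laminar:
  assumes hole: "is_hole V E vs" "5 \<le> length vs" "l \<in> set vs"
    and l: "nbhd E l \<inter> set vs = {u, w}" "u \<noteq> w"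
    and "laminar E A'" "u \<in> A'" "w \<in> A'"
  shows False
proof -
  have ic: "is_induced_cycle V E vs" using hole unfolding is_hole_def by blast
  have "l \<in> nbhd E u \<inter> set vs" "l \<in> nbhd E w \<inter> set vs"
    using l hole(3) E_symp unfolding nbhd_def by (auto dest: sympD)
  then obtain u' w' where u: "nbhd E u \<inter> set vs = {l, u'}" "u' \<noteq> l"
    and w: "nbhd E w \<inter> set vs = {l, w'}" "w' \<noteq> l"
    using induced_cycle_other_nbr[OF ic E_symp] l(1) by (metis IntD2 insertI1 insertI2)
  have "\<not> E w u'" using long_induced_cycle_P4_ends[OF ic E_symp hole(2,3) l u(1)] u(2) by blast
  moreover have "\<not> E u w'"
    using long_induced_cycle_P4_ends[OF ic E_symp hole(2,3) _ _ w(1)] l w(2) by (metis insert_commute)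
  moreover have "l \<in> nbhd E u \<inter> nbhd E w" "u' \<in> nbhd E u" "w' \<in> nbhd E w"
    using u w \<open>l \<in> nbhd E u \<inter> set vs\<close> \<open>l \<in> nbhd E w \<inter> set vs\<close> by blast+
  ultimately show False
    using laminarD[OF assms(6-8) l(2)] unfolding nbhd_def by blast
qed

text \<open>Any other hole vertex \<open>x\<close> adjacent to \<open>p\<close> shares a laminar family with \<open>u\<close> or \<open>w\<close>,
  and laminarity would force all hole-neighbours of \<open>x\<close>, in particular \<open>l\<close>, into that
  neighbourhood.\<close>
lemma long_hole_common_nbr_twin:
  assumes hole: "is_hole V E vs" "5 \<le> length vs" "l \<in> set vs" "l \<in> B"
    and l: "nbhd E l \<inter> set vs = {u, w}" "u \<noteq> w"
    and p: "p \<in> B" "p \<noteq> l" "p \<in> nbhd E u" "p \<in> nbhd E w"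
  shows "p \<notin> set vs" "x \<in> set vs \<Longrightarrow> E p x \<longleftrightarrow> E l x"
proof -
  have ic: "is_induced_cycle V E vs" using hole unfolding is_hole_def by blast
  have in_vs: "u \<in> set vs" "w \<in> set vs" using l(1) by blast+
  have uw_A: "u \<in> A" "w \<in> A" using l(1) hole(4) edge_AB V_split unfolding nbhd_def by blast+
  show "p \<notin> set vs"
  proof
    assume "p \<in> set vs"
    have "l \<in> nbhd E u \<inter> set vs" using l(1) hole(3) E_symp unfolding nbhd_def by (auto dest: sympD)
    then obtain u' where u': "u' \<noteq> l" "nbhd E u \<inter> set vs = {l, u'}"
      using induced_cycle_other_nbr[OF ic E_symp in_vs(1)] by blast
    then have "p = u'" using p \<open>p \<in> set vs\<close> by blast
    then show False
      using long_induced_cycle_P4_ends[OF ic E_symp hole(2,3) l u'(2,1)] p(4) E_symp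
      unfolding nbhd_def by (auto dest: sympD)
  qed
  assume "x \<in> set vs"
  show "E p x \<longleftrightarrow> E l x"
  proof (cases "x \<in> {u, w}")
    case True
    then show ?thesis using l(1) p(3,4) E_symp unfolding nbhd_def by (auto dest: sympD)
  next
    case False
    then have "\<not> E l x" using l(1) \<open>x \<in> set vs\<close> unfolding nbhd_def by blast
    moreover have "\<not> E p x"
    proof
      assume "E p x"
      then have "x \<in> A" using p(1) edge_AB V_split by blast
      moreover have "\<not> (u \<in> A1 \<and> w \<in> A1)" "\<not> (u \<in> A2 \<and> w \<in> A2)"
        using long_hole_nbrs_not_laminar[OF hole(1-3) l] laminar1 laminar2 by blast+
      ultimately obtain v A' where v: "v \<in> {u, w}" "laminar E A'" "x \<in> A'" "v \<in> A'"
        using uw_A A_split laminar1 laminar2 by blast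
      have "p \<in> nbhd E x \<inter> nbhd E v" "l \<in> nbhd E v" "l \<notin> nbhd E x"
        using \<open>E p x\<close> p(3,4) v(1) l(1) \<open>\<not> E l x\<close> E_symp unfolding nbhd_def by (auto dest: sympD)
      then have "nbhd E x \<subseteq> nbhd E v" using laminarD[OF v(2-4)] False v(1) by blast
      then have "nbhd E x \<inter> set vs = nbhd E v \<inter> set vs"
        using induced_cycle_nbhd_mono[OF ic E_symp \<open>x \<in> set vs\<close>] v(1) in_vs by blast
      then have "l \<in> nbhd E x" using \<open>l \<in> nbhd E v\<close> hole(3) by blast
      then show False using \<open>\<not> E l x\<close> E_symp unfolding nbhd_def by (auto dest: sympD)
    qed
    ultimately show ?thesis by blast
  qed
qed

lemma hole_replace_by_twin:
  assumes hole: "is_hole V E vs" and "l \<in> set vs" "p \<notin> set vs"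
    and S: "p \<in> S" "set vs - {l} \<subseteq> S"
    and twin: "\<And>x. x \<in> set vs \<Longrightarrow> E p x \<longleftrightarrow> E l x"
  shows "is_hole S (restrict_rel E S) (map (\<lambda>y. if y = l then p else y) vs)"
proof -
  let ?g = "\<lambda>y. if y = l then p else y"
  have "restrict_rel E S (?g x) (?g y) \<longleftrightarrow> E x y" if "x \<in> set vs" "y \<in> set vs" for x y
    using that twin[of x] twin[of y] S E_symp E_irreflp unfolding restrict_rel_def
    by (auto dest: sympD irreflpD)
  moreover have "inj_on ?g (set vs)" using \<open>p \<notin> set vs\<close> unfolding inj_on_def by auto
  moreover have "?g ` set vs \<subseteq> S" using S by auto
  ultimately show ?thesis using hole induced_cycle_map[of V E vs ?g S "restrict_rel E S"]
    unfolding is_hole_def by simp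
qed

lemma nbhds_are_subtrees_remove_leaf:
  assumes "is_tree B T" "nbhds_are_subtrees B T E A" and leaf: "\<And>q. T l q \<Longrightarrow> q = p"
  shows "nbhds_are_subtrees (B - {l}) (\<lambda>x y. T x y \<and> x \<noteq> l \<and> y \<noteq> l)
           (restrict_rel E (A \<union> (B - {l}))) A"
  unfolding nbhds_are_subtrees_def subtree_vertex_set_def
proof (intro ballI conjI)
  fix a assume "a \<in> A"
  then have sub: "nbhd E a \<subseteq> B" "connected_set T (nbhd E a)"
    using assms(2) unfolding nbhds_are_subtrees_def subtree_vertex_set_def by auto
  have g: "graph B T" using assms(1) unfolding is_tree_def by blast
  have "nbhd (restrict_rel E (A \<union> (B - {l}))) a = nbhd E a - {l}"
    using nbhd_restrict[OF \<open>a \<in> A\<close>] sub(1) by blast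
  then show "nbhd (restrict_rel E (A \<union> (B - {l}))) a \<subseteq> B - {l}"
    "connected_set (\<lambda>x y. T x y \<and> x \<noteq> l \<and> y \<noteq> l) (nbhd (restrict_rel E (A \<union> (B - {l}))) a)"
    using sub connected_set_remove_leaf[OF graph_symp[OF g] graph_irreflp[OF g] sub(2) leaf] by auto
qed

text \<open>The neighbour \<open>p\<close> of a leaf \<open>l\<close> lies in the neighbourhood subtrees of both
  hole-neighbours of \<open>l\<close>, so it can take the place of \<open>l\<close> on the hole.\<close>
lemma long_hole_replace_leaf:
  assumes tree: "nbhds_are_subtrees B T E A" "symp T"
    and leaf: "l \<in> B" "\<And>q. T l q \<Longrightarrow> q = p" and p: "p \<in> B" "p \<noteq> l"
    and hole: "is_hole V E vs" "5 \<le> length vs" "l \<in> set vs"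
  shows "is_hole (A \<union> (B - {l})) (restrict_rel E (A \<union> (B - {l}))) (map (\<lambda>y. if y = l then p else y) vs)"
proof -
  have ic: "is_induced_cycle V E vs" using hole(1) unfolding is_hole_def by blast
  obtain u w where "cycle_adj vs l u" "cycle_adj vs w l"
    using cycle_adj_succ_exists[OF hole(3)] cycle_adj_pred_exists[OF hole(3)] by blast
  note uw = induced_cycle_nbhd[OF ic E_symp this]
  have "p \<in> nbhd E v" if "v \<in> {u, w}" for v
  proof -
    have "v \<in> A" "v \<in> set vs" using uw(1) that leaf(1) edge_AB V_split unfolding nbhd_def by blast+
    have "l \<in> nbhd E v \<inter> set vs" using uw(1) that hole(3) E_symp unfolding nbhd_def by (auto dest: sympD)
    then obtain v' where "v' \<noteq> l" "nbhd E v \<inter> set vs = {l, v'}"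
      by (rule induced_cycle_other_nbr[OF ic E_symp \<open>v \<in> set vs\<close>])
    then have "l \<in> nbhd E v" "v' \<in> nbhd E v" "v' \<noteq> l" by auto
    moreover have "connected_set T (nbhd E v)"
      using tree(1) \<open>v \<in> A\<close> unfolding nbhds_are_subtrees_def subtree_vertex_set_def by blast
    ultimately show ?thesis using leaf_nbr_in_connected_set[OF tree(2) _ leaf(2)] by blast
  qed
  then have "p \<in> nbhd E u" "p \<in> nbhd E w" by auto
  note twin = long_hole_common_nbr_twin[OF hole leaf(1) uw p this]
  have "p \<in> A \<union> (B - {l})" "set vs - {l} \<subseteq> A \<union> (B - {l})"
    using p hole_in_V[OF hole(1)] V_split by auto
  from hole_replace_by_twin[OF hole(1,3) twin(1) this twin(2)] show ?thesis .
qed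

lemma long_hole_survives_leaf_removal:
  assumes tree: "is_tree B T" "nbhds_are_subtrees B T E A"
    and hole: "is_hole V E vs" "5 \<le> length vs"
  obtains l T' vs' where "l \<in> B" "is_tree (B - {l}) T'"
    "nbhds_are_subtrees (B - {l}) T' (restrict_rel E (A \<union> (B - {l}))) A"
    "is_hole (A \<union> (B - {l})) (restrict_rel E (A \<union> (B - {l}))) vs'" "length vs' = length vs"
proof -
  have g: "graph B T" using tree(1) unfolding is_tree_def by blast
  obtain b1 b2 where "b1 \<in> B" "b2 \<in> B" "b1 \<noteq> b2" using hole_meets_B_twice[OF hole(1)] .
  then obtain l p where l: "l \<in> B" "T l p" and leaf: "\<And>q. T l q \<Longrightarrow> q = p"
    using tree_has_leaf[OF tree(1)] by metis
  have p: "p \<in> B" "p \<noteq> l" using graph_edge_in[OF g l(2)] l(2) graph_irreflp[OF g] by (auto dest: irreflpD)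
  let ?S = "A \<union> (B - {l})"
  have "\<exists>vs'. is_hole ?S (restrict_rel E ?S) vs' \<and> length vs' = length vs"
  proof (cases "l \<in> set vs")
    case False
    then have "set vs \<subseteq> ?S" using hole_in_V[OF hole(1)] V_split by blast
    then show ?thesis using hole_restrict_rel_iff[of ?S V vs E] hole(1) V_split by blast
  next
    case True
    show ?thesis
      using long_hole_replace_leaf[OF tree(2) graph_symp[OF g] l(1) leaf p hole True] by fastforce
  qed
  then show ?thesis
    using that l(1) tree_remove_leaf[OF tree(1) leaf] nbhds_are_subtrees_remove_leaf[OF tree leaf] by blast
qed

end

lemma subtree_nbhds_imp_all_holes_length_four:
  assumes "two_laminar V E A B A1 A2" "is_tree B T" "nbhds_are_subtrees B T E A"
  shows "all_holes_length_four V E"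
proof -
  have "finite B" using two_laminar.finite_B[OF assms(1)] .
  then show ?thesis using assms
  proof (induction B arbitrary: V E T rule: finite_psubset_induct)
    case (psubset B)
    interpret two_laminar V E A B A1 A2 by (fact psubset.prems(1))
    show ?case unfolding all_holes_length_four_def
    proof (intro allI impI)
      fix vs assume hole: "is_hole V E vs"
      show "length vs = 4"
      proof (rule ccontr)
        assume "length vs \<noteq> 4"
        then have "5 \<le> length vs" using hole unfolding is_hole_def by simp
        then obtain l T' vs' where l: "l \<in> B" "is_tree (B - {l}) T'"
          "nbhds_are_subtrees (B - {l}) T' (restrict_rel E (A \<union> (B - {l}))) A"
          "is_hole (A \<union> (B - {l})) (restrict_rel E (A \<union> (B - {l}))) vs'" "length vs' = length vs"
          by (rule long_hole_survives_leaf_removal[OF psubset.prems(2,3) hole])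
        have "all_holes_length_four (A \<union> (B - {l})) (restrict_rel E (A \<union> (B - {l})))"
          using psubset.IH[of "B - {l}"] restrict[of "B - {l}"] l(1-3) by blast
        then show False using l(4,5) \<open>length vs \<noteq> 4\<close> unfolding all_holes_length_four_def by auto
      qed
    qed
  qed
qed

section \<open>Holes of length four give a subtree representation\<close>

definition attachable :: "('v \<Rightarrow> 'v \<Rightarrow> bool) \<Rightarrow> 'v set \<Rightarrow> 'v \<Rightarrow> 'v \<Rightarrow> bool" where
  "attachable E A b b' \<longleftrightarrow> b \<noteq> b' \<and> (\<forall>a\<in>A. b \<in> nbhd E a \<longrightarrow> nbhd E a \<subseteq> {b} \<or> b' \<in> nbhd E a)"

context two_laminar
begin

lemma subsingleton_subtree_representation:
  assumes "\<And>x y. x \<in> B \<Longrightarrow> y \<in> B \<Longrightarrow> x = y"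
  shows "is_tree B (\<lambda>_ _. False)" "nbhds_are_subtrees B (\<lambda>_ _. False) E A"
proof -
  show "is_tree B (\<lambda>_ _. False)"
    using assms finite_B unfolding is_tree_def graph_def connected_set_def is_cycle_def
    by (auto intro: exI[of _ 0])
  have "connected_set (\<lambda>_ _. False) (nbhd E a)" if "a \<in> A" for a
  proof (cases "nbhd E a = {}")
    case False
    then obtain x where "x \<in> nbhd E a" by blast
    then have "nbhd E a \<subseteq> {x}" using assms nbhd_subset_B[OF that] by blast
    then show ?thesis by (rule connected_set_subsingleton)
  qed (simp add: connected_set_def)
  then show "nbhds_are_subtrees B (\<lambda>_ _. False) E A"
    unfolding nbhds_are_subtrees_def subtree_vertex_set_def using nbhd_subset_B by blast
qed

lemma attach_leaf:
  assumes "b \<in> B" "b' \<in> B" "attachable E A b b'"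
    and T': "is_tree (B - {b}) T'" "nbhds_are_subtrees (B - {b}) T' (restrict_rel E (A \<union> (B - {b}))) A"
  shows "is_tree B (add_edge T' b b')" "nbhds_are_subtrees B (add_edge T' b b') E A"
proof -
  have B: "insert b (B - {b}) = B" using assms(1) by blast
  have "b \<noteq> b'" using assms(3) unfolding attachable_def by blast
  then show "is_tree B (add_edge T' b b')" using tree_add_leaf[OF T'(1)] assms(2) B by force
  have symp_T': "symp T'" using T'(1) graph_symp unfolding is_tree_def by blast
  show "nbhds_are_subtrees B (add_edge T' b b') E A"
    unfolding nbhds_are_subtrees_def subtree_vertex_set_def
  proof (intro ballI conjI)
    fix a assume "a \<in> A"
    then show "nbhd E a \<subseteq> B" by (rule nbhd_subset_B)
    have "nbhd (restrict_rel E (A \<union> (B - {b}))) a = nbhd E a - {b}"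
      using nbhd_restrict[OF \<open>a \<in> A\<close>] nbhd_subset_B[OF \<open>a \<in> A\<close>] by blast
    then have conn: "connected_set T' (nbhd E a - {b})"
      using T'(2) \<open>a \<in> A\<close> unfolding nbhds_are_subtrees_def subtree_vertex_set_def by auto
    consider "b \<notin> nbhd E a" | "nbhd E a \<subseteq> {b}" | "b \<in> nbhd E a" "b' \<in> nbhd E a"
      using assms(3) \<open>a \<in> A\<close> unfolding attachable_def by blast
    then show "connected_set (add_edge T' b b') (nbhd E a)"
    proof cases
      case 1
      then show ?thesis using connected_set_mono[OF conn] by (simp add: add_edge_def)
    next
      case 2
      then show ?thesis by (rule connected_set_subsingleton)
    next
      case 3
      then have "b' \<in> nbhd E a - {b}" "insert b (nbhd E a - {b}) = nbhd E a"
        using \<open>b \<noteq> b'\<close> by blast+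
      then show ?thesis using connected_set_add_leaf[OF symp_T' conn, of b' b] by simp
    qed
  qed
qed

end

text \<open>\<open>K\<close> is the \<open>B\<close>-side of the component of \<open>c\<close> in \<open>G - N[z]\<close>, and the crossing
  vertices are the neighbours of \<open>z\<close> that also see \<open>K\<close>.\<close>
locale attach_context = two_laminar +
  fixes z c :: 'v
  assumes holes: "all_holes_length_four V E" and z: "z \<in> B" and c: "c \<in> B" "c \<noteq> z"
begin

definition far :: "'v set" where
  "far = V - insert z (nbhd E z)"

definition K :: "'v set" where
  "K = {b \<in> B. (restrict_rel E far)\<^sup>*\<^sup>* c b}"

definition crossing :: "'v \<Rightarrow> bool" where
  "crossing a \<longleftrightarrow> a \<in> nbhd E z \<and> nbhd E a \<inter> K \<noteq> {}"

lemma nbhd_z_subset_A: "nbhd E z \<subseteq> A"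
  using z edge_AB V_split unfolding nbhd_def by blast

lemma c_far: "c \<in> far"
  using c nbhd_z_subset_A V_split unfolding far_def by blast

lemma reach_far: "(restrict_rel E far)\<^sup>*\<^sup>* c x \<Longrightarrow> x \<in> far"
  by (induction rule: rtranclp_induct) (auto simp: c_far restrict_rel_def)

lemma K_subset: "K \<subseteq> B \<inter> far" and c_in_K: "c \<in> K"
  using reach_far c unfolding K_def by auto

lemma z_notin_K: "z \<notin> K"
  using K_subset unfolding far_def by blast

lemma crossing_in_A: "crossing a \<Longrightarrow> a \<in> A \<and> a \<notin> far"
  using nbhd_z_subset_A unfolding crossing_def far_def by blast

lemma nbhd_subset_K:
  assumes "a \<in> A" "a \<notin> nbhd E z" "b \<in> K" "b \<in> nbhd E a"
  shows "nbhd E a \<subseteq> K"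
proof
  fix y assume "y \<in> nbhd E a"
  have "z \<notin> nbhd E a" using assms(2) E_symp unfolding nbhd_def by (auto dest: sympD)
  have "y \<in> B" using \<open>y \<in> nbhd E a\<close> nbhd_subset_B[OF assms(1)] by blast
  then have "a \<in> far" "y \<in> far" "y \<in> B"
    using assms(1,2) \<open>y \<in> nbhd E a\<close> \<open>z \<notin> nbhd E a\<close> nbhd_z_subset_A z V_split
    unfolding far_def by auto
  moreover have "b \<in> far" "(restrict_rel E far)\<^sup>*\<^sup>* c b" using assms(3) K_subset unfolding K_def by auto
  moreover have "E b a" "E a y" using assms(4) \<open>y \<in> nbhd E a\<close> E_symp unfolding nbhd_def by (auto dest: sympD)
  ultimately have "restrict_rel E far b a" "restrict_rel E far a y" "(restrict_rel E far)\<^sup>*\<^sup>* c b"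
    unfolding restrict_rel_def by blast+
  then have "(restrict_rel E far)\<^sup>*\<^sup>* c y" by (meson rtranclp.rtrancl_into_rtrancl)
  then show "y \<in> K" using \<open>y \<in> B\<close> unfolding K_def by blast
qed

lemma K_path:
  assumes "k1 \<in> K \<inter> S1" "k2 \<in> K \<inter> S2"
  obtains P where "induced_path E P" "P \<noteq> []" "hd P \<in> K \<inter> S1" "last P \<in> K \<inter> S2" "set P \<subseteq> far"
    "\<And>x. x \<in> set P \<Longrightarrow> x \<in> B \<inter> S1 \<Longrightarrow> x = hd P" "\<And>x. x \<in> set P \<Longrightarrow> x \<in> B \<inter> S2 \<Longrightarrow> x = last P"
proof -
  let ?R = "restrict_rel E far"
  have "symp ?R" "irreflp ?R"
    using E_symp E_irreflp unfolding restrict_rel_def by (auto intro: sympI irreflpI dest: sympD irreflpD)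
  have "?R\<^sup>*\<^sup>* c k1" "?R\<^sup>*\<^sup>* c k2" using assms unfolding K_def by auto
  then have "?R\<^sup>*\<^sup>* k1 k2"
    using symp_rtranclp[OF \<open>symp ?R\<close>] by (meson rtranclp_trans sympD)
  then obtain xs where "walk ?R xs" "hd xs = k1" "last xs = k2" by (rule rtranclp_imp_walk)
  then obtain P where P: "walk ?R P" "induced_path ?R P" "hd P \<in> K \<inter> S1" "last P \<in> K \<inter> S2"
    and first: "\<And>x. x \<in> set P \<Longrightarrow> x \<in> K \<inter> S1 \<Longrightarrow> x = hd P"
    and final: "\<And>x. x \<in> set P \<Longrightarrow> x \<in> K \<inter> S2 \<Longrightarrow> x = last P"
    using shortest_walk_induced[OF \<open>symp ?R\<close> \<open>irreflp ?R\<close>] assms by metis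
  have reach: "?R\<^sup>*\<^sup>* c x" if "x \<in> set P" for x
    using walk_imp_rtranclp[OF P(1) that] P(3) unfolding K_def by (auto intro: rtranclp_trans)
  then have P_far: "set P \<subseteq> far" using reach_far by blast
  have "induced_path E P"
    using P(2) P_far path_adj_in_set unfolding induced_path_def restrict_rel_def by blast
  moreover have "P \<noteq> []" using P(1) unfolding walk_def by blast
  moreover have "x \<in> K" if "x \<in> set P" "x \<in> B" for x using reach that unfolding K_def by blast
  ultimately show ?thesis
    using that[OF _ _ P(3,4) P_far] first final by blast
qed

text \<open>Two crossing vertices with disjoint traces on \<open>K\<close> would close a long hole: a shortest
  path in \<open>G - N[z]\<close> between their neighbourhoods, followed by \<open>a\<^sub>2 z a\<^sub>1\<close>.\<close>
lemma crossing_nbhds_meet_in_K: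
  assumes "crossing a1" "crossing a2"
  shows "nbhd E a1 \<inter> nbhd E a2 \<inter> K \<noteq> {}"
proof
  assume disj: "nbhd E a1 \<inter> nbhd E a2 \<inter> K = {}"
  obtain k1 k2 where k: "k1 \<in> K \<inter> nbhd E a1" "k2 \<in> K \<inter> nbhd E a2"
    using assms unfolding crossing_def by blast
  obtain P where P: "induced_path E P" "P \<noteq> []" "hd P \<in> K \<inter> nbhd E a1"
    "last P \<in> K \<inter> nbhd E a2" "set P \<subseteq> far"
    and first: "\<And>x. x \<in> set P \<Longrightarrow> x \<in> B \<inter> nbhd E a1 \<Longrightarrow> x = hd P"
    and final: "\<And>x. x \<in> set P \<Longrightarrow> x \<in> B \<inter> nbhd E a2 \<Longrightarrow> x = last P"
    using K_path[OF k] by blast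
  have a: "a1 \<in> A" "a2 \<in> A" "a1 \<notin> far" "a2 \<notin> far" "z \<notin> far"
    using crossing_in_A assms unfolding far_def by auto
  have "a1 \<noteq> a2" using disj \<open>k1 \<in> K \<inter> nbhd E a1\<close> by blast
  have za: "E a1 z" "E a2 z" "E z a1" "E z a2"
    using assms E_symp unfolding crossing_def nbhd_def by (auto dest: sympD)
  have ends: "E a1 (hd P)" "E (last P) a2" "hd P \<in> B" "last P \<in> B" "hd P \<noteq> last P"
    using P(3,4) a(1,2) nbhd_subset_B disj E_symp unfolding nbhd_def by (auto dest: sympD)
  have "3 \<le> length P" using induced_path_B_ends_length[OF P(1,2) ends(3-5)] .
  let ?Q = "[a2, z, a1]"
  have Q: "induced_path E ?Q"
    using za \<open>a1 \<noteq> a2\<close> a(1,2) z not_edge_A V_split E_irreflp unfolding induced_path_def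
    by (auto simp: path_adj_Cons dest: irreflpD)
  have no_chord: "(x = last P \<and> y = hd ?Q) \<or> (x = hd P \<and> y = last ?Q)"
    if xy: "x \<in> set P" "y \<in> set ?Q" "E x y \<or> E y x" for x y
  proof -
    have "x \<in> far" "E y x" using xy P(5) E_symp by (auto dest: sympD)
    then have x_nz: "x \<notin> nbhd E z" unfolding far_def by blast
    then have "x \<in> B" using \<open>E y x\<close> edge_AB V_split xy(2) a(1,2) unfolding nbhd_def by auto
    then consider "y = a2" "x \<in> B \<inter> nbhd E a2" | "y = a1" "x \<in> B \<inter> nbhd E a1"
      using xy(2) \<open>E y x\<close> x_nz unfolding nbhd_def by auto
    then show ?thesis using first[OF xy(1)] final[OF xy(1)] by cases auto
  qed
  have "set P \<inter> set ?Q = {}" "set P \<union> set ?Q \<subseteq> V"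
    using P(5) a z V_split unfolding far_def by auto
  then have "is_induced_cycle V E (P @ ?Q)"
    using induced_cycle_append[OF P(1,2) Q _ _ _ _ _ _ no_chord] ends(1,2) \<open>3 \<le> length P\<close> by simp
  then show False
    using holes \<open>3 \<le> length P\<close> unfolding all_holes_length_four_def is_hole_def by auto
qed

text \<open>The crossing neighbourhoods of one laminar family pairwise meet, hence form a chain; its
  least member, or \<open>K\<close> if the family has no crossing vertex, bounds them all from below.\<close>
lemma crossing_family_least_nbhd:
  assumes "laminar E A'"
  shows "\<exists>M. (M = K \<or> (\<exists>m. crossing m \<and> M = nbhd E m)) \<and> (\<forall>a\<in>A'. crossing a \<longrightarrow> M \<subseteq> nbhd E a)"
proof (cases "\<exists>a\<in>A'. crossing a")
  case True
  let ?C = "nbhd E ` {a \<in> A'. crossing a}"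
  have "finite ?C" using finite_A crossing_in_A by (auto intro: finite_subset)
  moreover have "subset.chain UNIV ?C"
    unfolding subset_chain_def
  proof (intro conjI ballI subset_UNIV)
    fix N N' assume "N \<in> ?C" "N' \<in> ?C"
    then obtain a a' where "a \<in> A'" "a' \<in> A'" "crossing a" "crossing a'" "N = nbhd E a" "N' = nbhd E a'"
      by blast
    then show "N \<subseteq> N' \<or> N' \<subseteq> N"
      using laminarD[OF assms, of a a'] crossing_nbhds_meet_in_K[of a a'] by blast
  qed
  ultimately have "\<Inter>?C \<in> ?C" using True by (intro Inter_in_chain) auto
  then obtain m where "m \<in> A'" "crossing m" "nbhd E m = \<Inter>?C" by auto
  then show ?thesis by (intro exI[of _ "nbhd E m"]) blast
next
  case False
  then show ?thesis by blast
qed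

lemma common_point:
  obtains k0 where "k0 \<in> K" "\<And>a. crossing a \<Longrightarrow> k0 \<in> nbhd E a"
proof -
  obtain M1 where M1: "M1 = K \<or> (\<exists>m. crossing m \<and> M1 = nbhd E m)"
      "\<forall>a\<in>A1. crossing a \<longrightarrow> M1 \<subseteq> nbhd E a"
    using crossing_family_least_nbhd[OF laminar1] by blast
  obtain M2 where M2: "M2 = K \<or> (\<exists>m. crossing m \<and> M2 = nbhd E m)"
      "\<forall>a\<in>A2. crossing a \<longrightarrow> M2 \<subseteq> nbhd E a"
    using crossing_family_least_nbhd[OF laminar2] by blast
  have "M1 \<inter> M2 \<inter> K \<noteq> {}"
    using M1(1)
  proof
    assume "M1 = K"
    then show ?thesis using M2(1) c_in_K unfolding crossing_def by auto
  next
    assume "\<exists>m. crossing m \<and> M1 = nbhd E m"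
    then obtain m1 where m1: "crossing m1" "M1 = nbhd E m1" by blast
    from M2(1) show ?thesis
    proof
      assume "M2 = K"
      then show ?thesis using m1 unfolding crossing_def by auto
    next
      assume "\<exists>m. crossing m \<and> M2 = nbhd E m"
      then show ?thesis using m1 crossing_nbhds_meet_in_K by auto
    qed
  qed
  then obtain k0 where "k0 \<in> M1 \<inter> M2 \<inter> K" by blast
  moreover have "crossing a \<Longrightarrow> a \<in> A1 \<or> a \<in> A2" for a using crossing_in_A A_split by blast
  ultimately show ?thesis using that M1(2) M2(2) by blast
qed

lemma attachable_if_K_singleton:
  assumes "K = {c}"
  shows "attachable E A c z"
  unfolding attachable_def
proof (intro conjI ballI impI)
  show "c \<noteq> z" using c by simp
  fix a assume "a \<in> A" "c \<in> nbhd E a"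
  show "nbhd E a \<subseteq> {c} \<or> z \<in> nbhd E a"
  proof (cases "a \<in> nbhd E z")
    case True
    then show ?thesis using E_symp unfolding nbhd_def by (auto dest: sympD)
  next
    case False
    then show ?thesis using nbhd_subset_K[OF \<open>a \<in> A\<close> False c_in_K \<open>c \<in> nbhd E a\<close>] assms by blast
  qed
qed

text \<open>An attachable pair inside the component lifts to \<open>G\<close>: a neighbourhood leaving \<open>K\<close>
  belongs to a crossing vertex, so its trace on \<open>K\<close> contains the common point \<open>k0\<close> as well.\<close>
lemma attachable_lift_from_K:
  assumes k0: "k0 \<in> K" "\<And>a. crossing a \<Longrightarrow> k0 \<in> nbhd E a"
    and b: "b \<in> K" "b \<noteq> k0" "attachable (restrict_rel E (A \<union> K)) A b b'"
  shows "attachable E A b b'"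
  unfolding attachable_def
proof (intro conjI ballI impI)
  show "b \<noteq> b'" using b(3) unfolding attachable_def by blast
  fix a assume a: "a \<in> A" "b \<in> nbhd E a"
  have "nbhd (restrict_rel E (A \<union> K)) a = nbhd E a \<inter> K" by (rule nbhd_restrict[OF a(1)])
  then have "nbhd E a \<inter> K \<subseteq> {b} \<or> b' \<in> nbhd E a \<inter> K"
    using b a unfolding attachable_def by auto
  moreover have "nbhd E a \<subseteq> {b}" if "nbhd E a \<inter> K \<subseteq> {b}"
  proof (cases "a \<in> nbhd E z")
    case True
    then have "crossing a" using a(2) b(1) unfolding crossing_def by blast
    then show ?thesis using k0 b(2) that by blast
  next
    case False
    then show ?thesis using nbhd_subset_K[OF a(1) False b(1) a(2)] that by blast
  qed
  ultimately show "nbhd E a \<subseteq> {b} \<or> b' \<in> nbhd E a" by blast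
qed

end

lemma attachable_exists:
  assumes "attach_context V E A B A1 A2 z c"
  shows "\<exists>b\<in>B - {z}. \<exists>b'\<in>B. attachable E A b b'"
proof -
  have "finite B" using assms two_laminar.finite_B unfolding attach_context_def by blast
  then show ?thesis using assms
  proof (induction B arbitrary: V E z c rule: finite_psubset_induct)
    case (psubset B)
    interpret attach_context V E A B A1 A2 z c by (fact psubset.prems)
    obtain k0 where k0: "k0 \<in> K" "\<And>a. crossing a \<Longrightarrow> k0 \<in> nbhd E a"
      using common_point by blast
    show ?case
    proof (cases "K = {c}")
      case True
      then show ?thesis using attachable_if_K_singleton c z by blast
    next
      case False
      then obtain c' where "c' \<in> K" "c' \<noteq> k0" using c_in_K k0(1) by blast
      have K: "K \<subset> B" "K \<subseteq> B - {z}" using K_subset z_notin_K z by blast+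
      have "attach_context (A \<union> K) (restrict_rel E (A \<union> K)) A K A1 A2 k0 c'"
      proof (intro attach_context.intro attach_context_axioms.intro)
        show "two_laminar (A \<union> K) (restrict_rel E (A \<union> K)) A K A1 A2"
          using restrict[of K] K(1) by simp
        show "all_holes_length_four (A \<union> K) (restrict_rel E (A \<union> K))"
          using all_holes_length_four_restrict[OF holes, of "A \<union> K"] K(1) V_split by auto
        show "k0 \<in> K" "c' \<in> K" "c' \<noteq> k0" by fact+
      qed
      then obtain b b' where "b \<in> K - {k0}" "b' \<in> K" "attachable (restrict_rel E (A \<union> K)) A b b'"
        using psubset.IH[OF K(1)] by blast
      then show ?thesis using attachable_lift_from_K[OF k0] K(2) by blast
    qed
  qed
qed

lemma all_holes_length_four_imp_subtree_nbhds:
  assumes "two_laminar V E A B A1 A2" "all_holes_length_four V E"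
  shows "\<exists>T. is_tree B T \<and> nbhds_are_subtrees B T E A"
proof -
  have "finite B" using two_laminar.finite_B[OF assms(1)] .
  then show ?thesis using assms
  proof (induction B arbitrary: V E rule: finite_psubset_induct)
    case (psubset B)
    interpret two_laminar V E A B A1 A2 by (fact psubset.prems(1))
    show ?case
    proof (cases "\<exists>x\<in>B. \<exists>y\<in>B. x \<noteq> y")
      case True
      then obtain x y where "x \<in> B" "y \<in> B" "y \<noteq> x" by blast
      then have "attach_context V E A B A1 A2 x y"
        using psubset.prems by (intro attach_context.intro attach_context_axioms.intro) auto
      then obtain b b' where b: "b \<in> B" "b' \<in> B" "attachable E A b b'"
        using attachable_exists[OF \<open>attach_context V E A B A1 A2 x y\<close>] by blast
      let ?S = "A \<union> (B - {b})"
      have "two_laminar ?S (restrict_rel E ?S) A (B - {b}) A1 A2" by (rule restrict) blast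
      moreover have "all_holes_length_four ?S (restrict_rel E ?S)"
        using all_holes_length_four_restrict[OF psubset.prems(2), of ?S] V_split by blast
      ultimately obtain T' where "is_tree (B - {b}) T'" "nbhds_are_subtrees (B - {b}) T' (restrict_rel E ?S) A"
        using psubset.IH[of "B - {b}"] b(1) by blast
      then show ?thesis using attach_leaf[OF b] by blast
    next
      case False
      then show ?thesis using subsingleton_subtree_representation by blast
    qed
  qed
qed

theorem mainTheorem17:
  fixes V :: "'v set" and E :: "'v \<Rightarrow> 'v \<Rightarrow> bool" and A B A1 A2 :: "'v set"
  assumes "bipartite_with V E A B"
    and "A = A1 \<union> A2" and "A1 \<inter> A2 = {}"
    and "laminar E A1" and "laminar E A2"
  shows "(\<forall>vs. is_hole V E vs \<longrightarrow> length vs = 4) \<longleftrightarrow>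
         (\<exists>T. is_tree B T \<and> (\<forall>a\<in>A. subtree_vertex_set B T (nbhd E a)))"
proof -
  have setting: "two_laminar V E A B A1 A2"
    using assms by (intro two_laminar.intro)
  show ?thesis
  proof
    assume "\<forall>vs. is_hole V E vs \<longrightarrow> length vs = 4"
    then show "\<exists>T. is_tree B T \<and> (\<forall>a\<in>A. subtree_vertex_set B T (nbhd E a))"
      using all_holes_length_four_imp_subtree_nbhds[OF setting]
      unfolding all_holes_length_four_def nbhds_are_subtrees_def by blast
  next
    assume "\<exists>T. is_tree B T \<and> (\<forall>a\<in>A. subtree_vertex_set B T (nbhd E a))"
    then obtain T where "is_tree B T" "nbhds_are_subtrees B T E A"
      unfolding nbhds_are_subtrees_def by blast
    then show "\<forall>vs. is_hole V E vs \<longrightarrow> length vs = 4"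
      using subtree_nbhds_imp_all_holes_length_four[OF setting] unfolding all_holes_length_four_def by blast
  qed
qed

end
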